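(* The rules (mix) and (sc$_n$) ($n\ge2$) are $\mathsf{GK(A_m)^r}$-admissible: for all finite multisets $\Gamma,\Delta,\Pi,\Sigma$ of $\mathcal{L}_{A_m}^{\Box}$-formulas, if $\Gamma\Rightarrow\Delta$ and $\Pi\Rightarrow\Sigma$ are $\mathsf{GK(A_m)^r}$-derivable then so is $\Gamma,\Pi\Rightarrow\Sigma,\Delta$; and for every $n\ge2$, if $n\Gamma\Rightarrow n\Delta$ is $\mathsf{GK(A_m)^r}$-derivable then so is $\Gamma\Rightarrow\Delta$.
   Context: $\mathcal{L}_{A_m}^{\Box}$-formulas are built from a countably infinite set of variables using binary $\to$ and unary $\Box$. A sequent $\Gamma\Rightarrow\Delta$ is an ordered pair of finite multisets of formulas; $\Gamma,\Delta$ is multiset union, $n\Gamma$ is $\Gamma$ repeated $n$ times, $n[\varphi]$ is $n$ copies of $\varphi$, $\Box\Gamma=[\Box\varphi:\varphi\in\Gamma]$. The calculus $\mathsf{GK(A_m)^r}$ has the rules: (id) $\Delta\Rightarrow\Delta$ (no premises); ($\to\Rightarrow$) from $\Gamma,\psi\Rightarrow\varphi,\Delta$ infer $\Gamma,\varphi\to\psi\Rightarrow\Delta$; ($\Rightarrow\to$) from $\Gamma,\varphi\Rightarrow\psi,\Delta$ infer $\Gamma\Rightarrow\varphi\to\psi,\Delta$; and for each $k\ge1$, $n\ge0$ the rule ($\Box_{k,n}$): from $\Gamma_0\Rightarrow$ and $\Gamma_i\Rightarrow k[\varphi_i]$ ($i=1,\dots,n$) infer $\Delta,\Box\Gamma\Rightarrow\Box\varphi_1,\dots,\Box\varphi_n,\Delta$,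 where $k\Gamma=\Gamma_0\uplus\Gamma_1\uplus\dots\uplus\Gamma_n$. A derivation is a finite tree of sequents in which each node with its parents is a rule instance. *)

theory Defs
  imports Main "HOL-Library.Multiset"
begin

datatype fm = Var nat | Imp fm fm | Box fm

type_synonym sequent = "fm multiset \<times> fm multiset"

definition mrep :: "nat \<Rightarrow> 'a multiset \<Rightarrow> 'a multiset" where
  "mrep n M = repeat_mset n M"

inductive derivable :: "fm multiset \<Rightarrow> fm multiset \<Rightarrow> bool" where
  id: "derivable D D"
| imp_L: "derivable (G + {#psi#}) ({#phi#} + D) \<Longrightarrow> derivable (G + {#Imp phi psi#}) D"
| imp_R: "derivable (G + {#phi#}) ({#psi#} + D) \<Longrightarrow> derivable G ({#Imp phi psi#} + D)"
| box: "\<lbrakk> k \<ge> 1;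
          mrep k G = G0 + sum_list (map fst ps);
          derivable G0 {#};
          \<forall>(Gi, phi) \<in> set ps. derivable Gi (replicate_mset k phi) \<rbrakk>
        \<Longrightarrow> derivable (D + image_mset Box G) (mset (map (\<lambda>(Gi, phi). Box phi) ps) + D)"

end

theory Submission
  imports Defs
begin

text \<open>
  For (mix) the only interesting
  case is that both derivations end with box inferences, of multiplicities \<open>k\<close> and \<open>k'\<close>:
  repeating the premises of the first \<open>k'\<close> times and those of the second \<open>k\<close> times (the
  rules preserve derivability of repeated sequents) yields the premises of a single box inference
  of multiplicity \<open>k * k'\<close> with the mixed conclusion. For (sc\<open>\<^sub>n\<close>) the implication rules
  are invertible, so one may assume that \<open>n\<Gamma> \<Rightarrow> n\<Delta>\<close> contains no implication. Its last
  inference is then an axiom or a box inference whose premises come in \<open>n\<close> copies of each boxed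
  succedent formula; gathering each group into one premise by (mix) gives a box inference of
  multiplicity \<open>n * k\<close> with conclusion \<open>\<Gamma> \<Rightarrow> \<Delta>\<close>.
\<close>

lemma mem_repeat_msetD: "x \<in># repeat_mset m M \<Longrightarrow> x \<in># M"
  by (metis count_greater_zero_iff count_repeat_mset nat_0_less_mult_iff)

lemma image_mset_repeat_mset: "image_mset f (repeat_mset m M) = repeat_mset m (image_mset f M)"
  by (induction m) auto

lemma sum_mset_repeat_mset: "sum_mset (repeat_mset m M) = repeat_mset m (sum_mset M)"
  by (induction m) auto

lemma sum_mset_image_repeat_mset:
  "sum_mset (image_mset (\<lambda>x. repeat_mset m (f x)) M) = repeat_mset m (sum_mset (image_mset f M))"
  by (induction M) auto

lemma repeat_mset_replicate_mset: "repeat_mset m (replicate_mset k x) = replicate_mset (m * k) x"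
  by (simp add: multiset_eq_iff)

text \<open>
  The premises of the rule \<open>(\<Box>\<^sub>k\<^sub>,\<^sub>n)\<close> with principal part \<open>\<Box>G\<close>: \<open>Z\<close> is \<open>\<Gamma>\<^sub>0\<close> and \<open>Ps\<close> is
  the multiset of pairs \<open>(\<Gamma>\<^sub>i, \<phi>\<^sub>i)\<close>. The premise \<open>Z \<Rightarrow>\<close> is left out because the proof of
  (mix) needs a stronger property of \<open>Z\<close> than its derivability.
\<close>

definition box_premises ::
  "nat \<Rightarrow> fm multiset \<Rightarrow> fm multiset \<Rightarrow> (fm multiset \<times> fm) multiset \<Rightarrow> bool" where
  "box_premises k G Z Ps \<longleftrightarrow> k \<ge> 1 \<and> repeat_mset k G = Z + sum_mset (image_mset fst Ps)
     \<and> (\<forall>p\<in>#Ps. derivable (fst p) (replicate_mset k (snd p)))"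

lemma box_premises_of_rule:
  assumes "k \<ge> 1" "mrep k G = Z + sum_list (map fst ps)"
    and "\<forall>(H, \<phi>)\<in>set ps. derivable H (replicate_mset k \<phi>)"
  shows "box_premises k G Z (mset ps)"
  using assms by (auto simp: box_premises_def mrep_def sum_mset_sum_list[symmetric])

lemma mset_map_Box_snd: "mset (map (\<lambda>(H, \<phi>). Box \<phi>) ps) = image_mset Box (image_mset snd (mset ps))"
  by (induction ps) auto

lemma derivable_box:
  assumes "box_premises k G Z Ps" "derivable Z {#}"
  shows "derivable (D + image_mset Box G) (image_mset Box (image_mset snd Ps) + D)"
proof -
  obtain ps where ps: "mset ps = Ps"
    using ex_mset by blast
  have "derivable (D + image_mset Box G) (mset (map (\<lambda>(H, \<phi>). Box \<phi>) ps) + D)"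
  proof (rule derivable.box[of k G Z])
    show "mrep k G = Z + sum_list (map fst ps)"
      using assms(1) by (simp add: box_premises_def mrep_def ps[symmetric] sum_mset_sum_list[symmetric])
  qed (use assms ps in \<open>fastforce simp: box_premises_def\<close>)+
  then show ?thesis
    by (simp only: mset_map_Box_snd ps)
qed

lemma derivable_mset_induct [consumes 1, case_names id imp_L imp_R box]:
  assumes "derivable G D"
    and "\<And>D. P D D"
    and "\<And>G \<psi> \<phi> D. derivable (G + {#\<psi>#}) ({#\<phi>#} + D) \<Longrightarrow> P (G + {#\<psi>#}) ({#\<phi>#} + D)
           \<Longrightarrow> P (G + {#Imp \<phi> \<psi>#}) D"
    and "\<And>G \<phi> \<psi> D. derivable (G + {#\<phi>#}) ({#\<psi>#} + D) \<Longrightarrow> P (G + {#\<phi>#}) ({#\<psi>#} + D)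
           \<Longrightarrow> P G ({#Imp \<phi> \<psi>#} + D)"
    and "\<And>k G Z Ps D. box_premises k G Z Ps \<Longrightarrow> derivable Z {#} \<Longrightarrow> P Z {#}
           \<Longrightarrow> (\<And>p. p \<in># Ps \<Longrightarrow> P (fst p) (replicate_mset k (snd p)))
           \<Longrightarrow> P (D + image_mset Box G) (image_mset Box (image_mset snd Ps) + D)"
  shows "P G D"
  using assms(1)
proof (induction rule: derivable.induct)
  case (box k G G0 ps D)
  have "box_premises k G G0 (mset ps)"
    using box by (intro box_premises_of_rule) auto
  moreover have "P (fst p) (replicate_mset k (snd p))" if "p \<in># mset ps" for p
    using box(5) that by auto
  ultimately have "P (D + image_mset Box G) (image_mset Box (image_mset snd (mset ps)) + D)"
    using box(3,4) assms(5) by blast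
  then show ?case
    by (simp only: mset_map_Box_snd)
qed (fact assms(2), erule (1) assms(3), erule (1) assms(4))

lemma derivable_mset_cases [consumes 1, case_names id imp_L imp_R box]:
  assumes "derivable G D"
  obtains (id) "G = D"
  | (imp_L) \<phi> \<psi> where "Imp \<phi> \<psi> \<in># G"
  | (imp_R) \<phi> \<psi> where "Imp \<phi> \<psi> \<in># D"
  | (box) k B Z Ps C where "box_premises k B Z Ps" "derivable Z {#}"
      "G = C + image_mset Box B" "D = image_mset Box (image_mset snd Ps) + C"
  using assms
proof cases
  case (box k B Z ps C)
  have "box_premises k B Z (mset ps)"
    using box by (intro box_premises_of_rule) auto
  with box show ?thesis
    by (intro that(4)) (simp_all only: mset_map_Box_snd)
qed (use that in auto)

lemma box_premises_add:
  "box_premises k G Z Ps \<Longrightarrow> box_premises k G' Z' Ps'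
    \<Longrightarrow> box_premises k (G + G') (Z + Z') (Ps + Ps')"
  by (auto simp: box_premises_def add_ac)

lemma box_premises_identity:
  assumes "k \<ge> 1"
  shows "box_premises k E {#} (image_mset (\<lambda>\<phi>. (replicate_mset k \<phi>, \<phi>)) E)"
proof -
  have "sum_mset (image_mset (\<lambda>\<phi>. replicate_mset k \<phi>) E) = repeat_mset k E"
    by (induction E) auto
  then show ?thesis
    using assms by (auto simp: box_premises_def multiset.map_comp comp_def intro: derivable.id)
qed

lemma box_premises_repeat:
  assumes "box_premises k G Z Ps"
  shows "box_premises k (repeat_mset m G) (repeat_mset m Z) (repeat_mset m Ps)"
proof -
  from assms have "repeat_mset m (repeat_mset k G)
      = repeat_mset m Z + sum_mset (image_mset fst (repeat_mset m Ps))"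
    by (simp add: box_premises_def image_mset_repeat_mset sum_mset_repeat_mset)
  then show ?thesis
    using assms by (auto simp: box_premises_def mult.commute dest: mem_repeat_msetD)
qed

lemma derivable_imp_L_replicate:
  "derivable (G + replicate_mset j \<psi>) (replicate_mset j \<phi> + D)
    \<Longrightarrow> derivable (G + replicate_mset j (Imp \<phi> \<psi>)) D"
proof (induction j arbitrary: G D)
  case (Suc j)
  then have "derivable ((G + replicate_mset j \<psi>) + {#\<psi>#}) ({#\<phi>#} + (replicate_mset j \<phi> + D))"
    by (simp add: add_ac)
  then have "derivable ((G + {#Imp \<phi> \<psi>#}) + replicate_mset j \<psi>) (replicate_mset j \<phi> + D)"
    using derivable.imp_L by (simp add: add_ac)
  from Suc.IH[OF this] show ?case
    by (simp add: add_ac)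
qed simp

lemma derivable_imp_R_replicate:
  "derivable (G + replicate_mset j \<phi>) (replicate_mset j \<psi> + D)
    \<Longrightarrow> derivable G (replicate_mset j (Imp \<phi> \<psi>) + D)"
proof (induction j arbitrary: G D)
  case (Suc j)
  then have "derivable ((G + replicate_mset j \<phi>) + {#\<phi>#}) ({#\<psi>#} + (replicate_mset j \<psi> + D))"
    by (simp add: add_ac)
  then have "derivable (G + replicate_mset j \<phi>) (replicate_mset j \<psi> + ({#Imp \<phi> \<psi>#} + D))"
    using derivable.imp_R by (simp add: add_ac)
  from Suc.IH[OF this] show ?case
    by (simp add: add_ac)
qed simp

lemma derivable_repeat_mset:
  "derivable G D \<Longrightarrow> derivable (repeat_mset m G) (repeat_mset m D)"
proof (induction rule: derivable_mset_induct)
  case (id D)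
  show ?case by (rule derivable.id)
next
  case (imp_L G \<psi> \<phi> D)
  then show ?case
    using derivable_imp_L_replicate[of "repeat_mset m G" m \<psi> \<phi>] by (simp add: add_ac)
next
  case (imp_R G \<phi> \<psi> D)
  then show ?case
    using derivable_imp_R_replicate[of "repeat_mset m G" m \<phi> \<psi>] by (simp add: add_ac)
next
  case (box k G Z Ps D)
  from box(3) have "derivable (repeat_mset m Z) {#}"
    by simp
  from derivable_box[OF box_premises_repeat[OF box(1)] this, of "repeat_mset m D"]
  show ?case
    by (simp add: image_mset_repeat_mset)
qed

lemma box_premises_mult:
  assumes "box_premises k G Z Ps" "m \<ge> 1"
  shows "box_premises (m * k) G (repeat_mset m Z) (image_mset (apfst (repeat_mset m)) Ps)"
proof -
  have "derivable (repeat_mset m (fst p)) (replicate_mset (m * k) (snd p))" if "p \<in># Ps" for p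
    using derivable_repeat_mset[of "fst p" "replicate_mset k (snd p)" m] assms(1) that
    by (simp add: box_premises_def repeat_mset_replicate_mset)
  moreover from assms(1) have "repeat_mset (m * k) G = repeat_mset m (Z + sum_mset (image_mset fst Ps))"
    by (simp add: box_premises_def flip: repeat_mset_right)
  ultimately show ?thesis
    using assms by (auto simp: box_premises_def multiset.map_comp comp_def sum_mset_image_repeat_mset)
qed

lemma derivable_absorb_repeat:
  assumes "\<And>P S. derivable P S \<Longrightarrow> derivable (Z + P) S" and "derivable P S"
  shows "derivable (repeat_mset j Z + P) S"
  by (induction j) (use assms in \<open>auto simp: add.assoc\<close>)

text \<open>The hypothesis on \<open>Z\<close> is the outer induction hypothesis of (mix) for the premise \<open>Z \<Rightarrow>\<close>.\<close>

lemma derivable_mix_box: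
  assumes G: "box_premises k G Z Ps"
    and Z: "\<And>P S. derivable P S \<Longrightarrow> derivable (Z + P) S"
    and "derivable P S"
  shows "derivable (C + image_mset Box G + P) (S + image_mset Box (image_mset snd Ps) + C)"
  using assms(3)
proof (induction rule: derivable_mset_induct)
  case (id P)
  have "derivable Z {#}"
    using Z[OF derivable.id[of "{#}"]] by simp
  from derivable_box[OF G this, of "C + P"] show ?case
    by (simp add: add_ac)
next
  case (imp_L P \<psi> \<phi> S)
  then have "derivable ((C + image_mset Box G + P) + {#\<psi>#})
      ({#\<phi>#} + (S + image_mset Box (image_mset snd Ps) + C))"
    by (simp add: add_ac)
  from derivable.imp_L[OF this] show ?case
    by (simp add: add_ac)
next
  case (imp_R P \<phi> \<psi> S)
  then have "derivable ((C + image_mset Box G + P) + {#\<phi>#})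
      ({#\<psi>#} + (S + image_mset Box (image_mset snd Ps) + C))"
    by (simp add: add_ac)
  from derivable.imp_R[OF this] show ?case
    by (simp add: add_ac)
next
  case (box k' G' Z' Qs D)
  let ?Rs = "image_mset (apfst (repeat_mset k')) Ps + image_mset (apfst (repeat_mset k)) Qs"
  have k: "k \<ge> 1" "k' \<ge> 1"
    using G box(1) by (auto simp: box_premises_def)
  have "box_premises (k' * k) G' (repeat_mset k Z') (image_mset (apfst (repeat_mset k)) Qs)"
    using box_premises_mult[OF box(1) k(1)] by (simp only: mult.commute)
  with box_premises_mult[OF G k(2)]
  have merged: "box_premises (k' * k) (G + G') (repeat_mset k' Z + repeat_mset k Z') ?Rs"
    by (rule box_premises_add)
  have "derivable (repeat_mset k Z') {#}"
    using derivable_repeat_mset[OF box(2), of k] by simp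
  then have "derivable (repeat_mset k' Z + repeat_mset k Z') {#}"
    using derivable_absorb_repeat[where Z = Z] Z by blast
  from derivable_box[OF merged this, of "C + D"] show ?case
    by (simp add: add_ac multiset.map_comp comp_def)
qed

theorem derivable_mix:
  "derivable G D \<Longrightarrow> derivable P S \<Longrightarrow> derivable (G + P) (S + D)"
proof (induction arbitrary: P S rule: derivable_mset_induct)
  case (id D)
  have "box_premises 1 {#} {#} {#}"
    by (simp add: box_premises_def)
  from derivable_mix_box[OF this _ id] show ?case
    by simp
next
  case (imp_L G \<psi> \<phi> D)
  from imp_L(2)[OF imp_L(3)] have "derivable ((G + P) + {#\<psi>#}) ({#\<phi>#} + (S + D))"
    by (simp add: add_ac)
  from derivable.imp_L[OF this] show ?case
    by (simp add: add_ac)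
next
  case (imp_R G \<phi> \<psi> D)
  from imp_R(2)[OF imp_R(3)] have "derivable ((G + P) + {#\<phi>#}) ({#\<psi>#} + (S + D))"
    by (simp add: add_ac)
  from derivable.imp_R[OF this] show ?case
    by (simp add: add_ac)
next
  case (box k G Z Ps D)
  from derivable_mix_box[OF box(1) _ box(5), of D] box(3) show ?case
    by (simp add: add_ac)
qed

lemma derivable_sum_premises:
  assumes "\<forall>p\<in>#Ps. snd p = \<phi> \<and> derivable (fst p) (replicate_mset k \<phi>)"
  shows "derivable (sum_mset (image_mset fst Ps)) (replicate_mset (size Ps * k) \<phi>)"
  using assms
proof (induction Ps)
  case empty
  show ?case by (simp add: derivable.id)
next
  case (add p Ps)
  then have "derivable (fst p + sum_mset (image_mset fst Ps))
      (replicate_mset (size Ps * k) \<phi> + replicate_mset k \<phi>)"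
    by (intro derivable_mix) auto
  moreover have "replicate_mset (size Ps * k) \<phi> + replicate_mset k \<phi>
      = replicate_mset (size (add_mset p Ps) * k) \<phi>"
    by (simp add: multiset_eq_iff)
  ultimately show ?case
    by simp
qed

lemma premises_regroup:
  assumes "image_mset snd Ps = repeat_mset n B"
    and "\<forall>p\<in>#Ps. derivable (fst p) (replicate_mset k (snd p))"
  shows "\<exists>Qs. image_mset snd Qs = B \<and> sum_mset (image_mset fst Qs) = sum_mset (image_mset fst Ps)
    \<and> (\<forall>q\<in>#Qs. derivable (fst q) (replicate_mset (n * k) (snd q)))"
  using assms
proof (induction B arbitrary: Ps)
  case empty
  then show ?case by auto
next
  case (add \<phi> B)
  from add.prems(1) obtain Ps\<^sub>1 Ps\<^sub>2 where Ps: "Ps = Ps\<^sub>1 + Ps\<^sub>2"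
    and Ps\<^sub>1: "image_mset snd Ps\<^sub>1 = replicate_mset n \<phi>"
    and Ps\<^sub>2: "image_mset snd Ps\<^sub>2 = repeat_mset n B"
    by (auto dest: image_mset_eq_plusD)
  obtain Qs where Qs: "image_mset snd Qs = B"
      "sum_mset (image_mset fst Qs) = sum_mset (image_mset fst Ps\<^sub>2)"
      "\<forall>q\<in>#Qs. derivable (fst q) (replicate_mset (n * k) (snd q))"
    using add.IH[OF Ps\<^sub>2] add.prems(2) Ps by auto
  have "\<forall>p\<in>#Ps\<^sub>1. snd p = \<phi> \<and> derivable (fst p) (replicate_mset k \<phi>)"
  proof
    fix p
    assume p: "p \<in># Ps\<^sub>1"
    then have "snd p \<in># replicate_mset n \<phi>"
      by (metis Ps\<^sub>1 image_eqI multiset.set_map)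
    then have "snd p = \<phi>"
      by (simp split: if_splits)
    then show "snd p = \<phi> \<and> derivable (fst p) (replicate_mset k \<phi>)"
      using p add.prems(2) Ps by auto
  qed
  from derivable_sum_premises[OF this] have "derivable (sum_mset (image_mset fst Ps\<^sub>1)) (replicate_mset (n * k) \<phi>)"
    using Ps\<^sub>1 by (metis size_image_mset size_replicate_mset)
  then show ?case
    using Qs Ps by (intro exI[of _ "add_mset (sum_mset (image_mset fst Ps\<^sub>1), \<phi>) Qs"]) auto
qed

lemma box_premises_cancel_repeat:
  assumes "box_premises k (repeat_mset n A) Z Ps" "image_mset snd Ps = repeat_mset n B" "n \<ge> 1"
  shows "\<exists>Qs. box_premises (n * k) A Z Qs \<and> image_mset snd Qs = B"
proof -
  obtain Qs where "image_mset snd Qs = B" "sum_mset (image_mset fst Qs) = sum_mset (image_mset fst Ps)"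
      "\<forall>q\<in>#Qs. derivable (fst q) (replicate_mset (n * k) (snd q))"
    using premises_regroup[OF assms(2)] assms(1) by (auto simp: box_premises_def)
  then show ?thesis
    using assms by (auto simp: box_premises_def mult.commute intro!: exI[of _ Qs])
qed

lemma Imp_in_box_context:
  "Imp a b \<in># C + image_mset Box G \<Longrightarrow> \<exists>C'. C = add_mset (Imp a b) C'"
  by (auto dest: multi_member_split)

lemma derivable_imp_L_inv:
  "derivable (add_mset (Imp a b) X) D \<Longrightarrow> derivable (add_mset b X) (add_mset a D)"
proof (induction "add_mset (Imp a b) X" D arbitrary: X rule: derivable_mset_induct)
  case id
  have "derivable (add_mset b X + {#a#}) ({#b#} + add_mset a X)"
    using derivable.id[of "add_mset a (add_mset b X)"] by (simp add: add_mset_commute)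
  from derivable.imp_R[OF this] show ?case
    by (simp add: add_mset_commute)
next
  case (imp_L G \<psi> \<phi> D)
  from imp_L.hyps(3) consider "G = X" "\<phi> = a" "\<psi> = b"
    | K where "G = add_mset (Imp a b) K" "X = add_mset (Imp \<phi> \<psi>) K"
    by (auto simp: add_eq_conv_ex)
  then show ?case
  proof cases
    case 1
    with imp_L.hyps(1) show ?thesis
      by simp
  next
    case (2 K)
    with imp_L.hyps(2)[of "add_mset \<psi> K"]
    have "derivable (add_mset b K + {#\<psi>#}) ({#\<phi>#} + add_mset a D)"
      by (simp add: add_mset_commute)
    from derivable.imp_L[OF this] show ?thesis
      using 2 by (simp add: add_mset_commute)
  qed
next
  case (imp_R \<phi> \<psi> D)
  from imp_R(2)[of "add_mset \<phi> X"]
  have "derivable (add_mset b X + {#\<phi>#}) ({#\<psi>#} + add_mset a D)"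
    by (simp add: add_mset_commute)
  from derivable.imp_R[OF this] show ?case
    by (simp add: add_mset_commute)
next
  case (box k G Z Ps C)
  then obtain C' where C': "C = add_mset (Imp a b) C'"
    by (metis Imp_in_box_context union_single_eq_member)
  with box.hyps(5) have X: "X = C' + image_mset Box G"
    by simp
  from derivable_box[OF box.hyps(1,2), of "add_mset a (add_mset b C')"]
  have "derivable (add_mset b X + {#a#}) ({#b#} + add_mset a (image_mset Box (image_mset snd Ps) + C'))"
    by (simp add: X add_mset_commute add_ac)
  from derivable.imp_R[OF this] show ?case
    by (simp add: C' add_ac)
qed

lemma derivable_imp_R_inv:
  "derivable G (add_mset (Imp a b) Y) \<Longrightarrow> derivable (add_mset a G) (add_mset b Y)"
proof (induction G "add_mset (Imp a b) Y" arbitrary: Y rule: derivable_mset_induct)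
  case id
  have "derivable (add_mset a Y + {#b#}) ({#a#} + add_mset b Y)"
    using derivable.id[of "add_mset a (add_mset b Y)"] by (simp add: add_mset_commute)
  from derivable.imp_L[OF this] show ?case
    by (simp add: add_mset_commute)
next
  case (imp_L G \<psi> \<phi>)
  from imp_L(2)[of "add_mset \<phi> Y"]
  have "derivable (add_mset a G + {#\<psi>#}) ({#\<phi>#} + add_mset b Y)"
    by (simp add: add_mset_commute)
  from derivable.imp_L[OF this] show ?case
    by (simp add: add_mset_commute)
next
  case (imp_R G \<phi> \<psi> D)
  from imp_R.hyps(3) consider "D = Y" "\<phi> = a" "\<psi> = b"
    | K where "D = add_mset (Imp a b) K" "Y = add_mset (Imp \<phi> \<psi>) K"
    by (auto simp: add_eq_conv_ex)
  then show ?case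
  proof cases
    case 1
    with imp_R.hyps(1) show ?thesis
      by simp
  next
    case (2 K)
    with imp_R.hyps(2)[of "add_mset \<psi> K"]
    have "derivable (add_mset a G + {#\<phi>#}) ({#\<psi>#} + add_mset b K)"
      by (simp add: add_mset_commute)
    from derivable.imp_R[OF this] show ?thesis
      using 2 by (simp add: add_mset_commute)
  qed
next
  case (box k G Z Ps C)
  then obtain C' where C': "C = add_mset (Imp a b) C'"
    by (metis Imp_in_box_context add.commute union_single_eq_member)
  with box.hyps(5) have Y: "Y = image_mset Box (image_mset snd Ps) + C'"
    by simp
  from derivable_box[OF box.hyps(1,2), of "add_mset a (add_mset b C')"]
  have "derivable (add_mset a (C' + image_mset Box G) + {#b#}) ({#a#} + add_mset b Y)"
    by (simp add: Y add_mset_commute add_ac)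
  from derivable.imp_L[OF this] show ?case
    by (simp add: C' add_ac)
qed

lemma derivable_imp_L_inv_replicate:
  "derivable (X + replicate_mset j (Imp a b)) Y
    \<Longrightarrow> derivable (X + replicate_mset j b) (replicate_mset j a + Y)"
proof (induction j arbitrary: X Y)
  case (Suc j)
  then have "derivable (add_mset (Imp a b) (X + replicate_mset j (Imp a b))) Y"
    by simp
  from derivable_imp_L_inv[OF this]
  have "derivable (add_mset b X + replicate_mset j (Imp a b)) (add_mset a Y)"
    by simp
  from Suc.IH[OF this] show ?case
    by simp
qed simp

lemma derivable_imp_R_inv_replicate:
  "derivable X (replicate_mset j (Imp a b) + Y)
    \<Longrightarrow> derivable (X + replicate_mset j a) (replicate_mset j b + Y)"
proof (induction j arbitrary: X Y)
  case (Suc j)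
  then have "derivable X (add_mset (Imp a b) (replicate_mset j (Imp a b) + Y))"
    by simp
  from derivable_imp_R_inv[OF this]
  have "derivable (add_mset a X) (replicate_mset j (Imp a b) + add_mset b Y)"
    by simp
  from Suc.IH[OF this] show ?case
    by simp
qed simp

lemma box_split: "\<exists>V A. M = V + image_mset Box A \<and> (\<forall>f\<in>#V. f \<notin> range Box)"
proof (induction M)
  case empty
  show ?case by auto
next
  case (add f M)
  then obtain V A where M: "M = V + image_mset Box A" and V: "\<forall>f\<in>#V. f \<notin> range Box"
    by blast
  show ?case
  proof (cases "f \<in> range Box")
    case True
    then obtain \<phi> where "f = Box \<phi>"
      by blast
    with M V show ?thesis
      by (intro exI[of _ V] exI[of _ "add_mset \<phi> A"]) simp
  next
    case False
    with M V show ?thesis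
      by (intro exI[of _ "add_mset f V"] exI[of _ A]) simp
  qed
qed

lemma box_split_unique:
  assumes "V + image_mset Box A = W + image_mset Box B"
    and "\<forall>f\<in>#V. f \<notin> range Box" "\<forall>f\<in>#W. f \<notin> range Box"
  shows "V = W" "A = B"
proof -
  have boxes: "filter_mset (\<lambda>f. f \<in> range Box) (image_mset Box X) = image_mset Box X" for X
    by (induction X) auto
  have non_boxes: "filter_mset (\<lambda>f. f \<notin> range Box) (image_mset Box X) = {#}" for X
    by (induction X) auto
  have box_free: "filter_mset (\<lambda>f. f \<notin> range Box) U = U" "filter_mset (\<lambda>f. f \<in> range Box) U = {#}"
    if "\<forall>f\<in>#U. f \<notin> range Box" for U
    using that by (auto simp: filter_mset_eq_conv)
  from arg_cong[OF assms(1), of "filter_mset (\<lambda>f. f \<notin> range Box)"] show "V = W"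
    using assms(2,3) by (simp add: non_boxes box_free)
  from arg_cong[OF assms(1), of "filter_mset (\<lambda>f. f \<in> range Box)"]
  have "image_mset Box A = image_mset Box B"
    using assms(2,3) by (simp add: boxes box_free)
  then show "A = B"
    using multiset.inj_map[of Box] by (auto simp: inj_def)
qed

lemma repeat_mset_box_context:
  assumes "n \<ge> 1"
    and "repeat_mset n G = C + image_mset Box B" "repeat_mset n D = image_mset Box \<Phi> + C"
  obtains V A E C\<^sub>B where "G = V + image_mset Box A" "D = V + image_mset Box E"
    "repeat_mset n A = C\<^sub>B + B" "repeat_mset n E = \<Phi> + C\<^sub>B"
proof -
  obtain V A where G: "G = V + image_mset Box A" and V: "\<forall>f\<in>#V. f \<notin> range Box"
    using box_split by blast
  obtain W E where D: "D = W + image_mset Box E" and W: "\<forall>f\<in>#W. f \<notin> range Box"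
    using box_split by blast
  obtain U C\<^sub>B where C: "C = U + image_mset Box C\<^sub>B" and U: "\<forall>f\<in>#U. f \<notin> range Box"
    using box_split by blast
  have repeat_box_free: "\<forall>f\<in>#repeat_mset n X. f \<notin> range Box" if "\<forall>f\<in>#X. f \<notin> range Box" for X
    using that by (auto dest: mem_repeat_msetD)
  have "repeat_mset n V + image_mset Box (repeat_mset n A) = U + image_mset Box (C\<^sub>B + B)"
    using assms(2) G C by (simp add: image_mset_repeat_mset add_ac)
  note G_parts = box_split_unique[OF this repeat_box_free[OF V] U]
  have "repeat_mset n W + image_mset Box (repeat_mset n E) = U + image_mset Box (\<Phi> + C\<^sub>B)"
    using assms(3) D C by (simp add: image_mset_repeat_mset add_ac)
  note D_parts = box_split_unique[OF this repeat_box_free[OF W] U]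
  have "V = W"
    using G_parts(1) D_parts(1) assms(1) repeat_mset_cancel1[of n V W] by simp
  with G D G_parts(2) D_parts(2) show thesis
    by (intro that) auto
qed

lemma derivable_repeat_mset_cancel_Imp_free:
  assumes "n \<ge> 1" and "derivable (repeat_mset n G) (repeat_mset n D)"
    and no_imp: "\<And>\<phi> \<psi>. Imp \<phi> \<psi> \<notin># G + D"
  shows "derivable G D"
  using assms(2)
proof (cases rule: derivable_mset_cases)
  case id
  with assms(1) show ?thesis
    by (simp add: repeat_mset_cancel1 derivable.id)
next
  case imp_L
  with no_imp show ?thesis
    by (auto dest: mem_repeat_msetD)
next
  case imp_R
  with no_imp show ?thesis
    by (auto dest: mem_repeat_msetD)
next
  case (box k B Z Ps C)
  obtain V A E C\<^sub>B where G: "G = V + image_mset Box A" and D: "D = V + image_mset Box E"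
    and A: "repeat_mset n A = C\<^sub>B + B" and E: "repeat_mset n E = image_mset snd Ps + C\<^sub>B"
    using repeat_mset_box_context[OF assms(1) box(3,4)] .
  have k: "k \<ge> 1"
    using box(1) by (simp add: box_premises_def)
  from box_premises_add[OF box_premises_identity[OF k] box(1)]
  have "box_premises k (repeat_mset n A) Z (image_mset (\<lambda>\<phi>. (replicate_mset k \<phi>, \<phi>)) C\<^sub>B + Ps)"
    by (simp add: A)
  moreover have "image_mset snd (image_mset (\<lambda>\<phi>. (replicate_mset k \<phi>, \<phi>)) C\<^sub>B + Ps) = repeat_mset n E"
    by (simp add: E multiset.map_comp comp_def add_ac)
  ultimately obtain Qs where "box_premises (n * k) A Z Qs" "image_mset snd Qs = E"
    using box_premises_cancel_repeat assms(1) by blast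
  from derivable_box[OF this(1) box(2), of V] this(2) show ?thesis
    by (simp add: G D add_ac)
qed

theorem derivable_repeat_mset_cancel:
  "n \<ge> 1 \<Longrightarrow> derivable (repeat_mset n G) (repeat_mset n D) \<Longrightarrow> derivable G D"
proof (induction "(\<Sum>f\<in>#G. size f) + (\<Sum>f\<in>#D. size f)" arbitrary: G D rule: less_induct)
  case less
  show ?case
  proof (cases "\<exists>a b X. G = add_mset (Imp a b) X")
    case True
    then obtain a b X where G: "G = add_mset (Imp a b) X"
      by blast
    from less.prems(2) have "derivable (repeat_mset n X + replicate_mset n (Imp a b)) (repeat_mset n D)"
      by (simp add: G add_ac)
    from derivable_imp_L_inv_replicate[OF this]
    have "derivable (repeat_mset n (add_mset b X)) (repeat_mset n (add_mset a D))"
      by (simp add: add_ac)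
    with less.hyps[of "add_mset b X" "add_mset a D"] less.prems(1)
    have "derivable (X + {#b#}) ({#a#} + D)"
      by (simp add: G)
    from derivable.imp_L[OF this] show ?thesis
      by (simp add: G)
  next
    case no_imp_G: False
    show ?thesis
    proof (cases "\<exists>a b Y. D = add_mset (Imp a b) Y")
      case True
      then obtain a b Y where D: "D = add_mset (Imp a b) Y"
        by blast
      from less.prems(2) have "derivable (repeat_mset n G) (replicate_mset n (Imp a b) + repeat_mset n Y)"
        by (simp add: D)
      from derivable_imp_R_inv_replicate[OF this]
      have "derivable (repeat_mset n (add_mset a G)) (repeat_mset n (add_mset b Y))"
        by (simp add: add_ac)
      with less.hyps[of "add_mset a G" "add_mset b Y"] less.prems(1)
      have "derivable (G + {#a#}) ({#b#} + Y)"
        by (simp add: D)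
      from derivable.imp_R[OF this] show ?thesis
        by (simp add: D)
    next
      case False
      with no_imp_G have "Imp \<phi> \<psi> \<notin># G + D" for \<phi> \<psi>
        using multi_member_split[of "Imp \<phi> \<psi>" G] multi_member_split[of "Imp \<phi> \<psi>" D] by auto
      with less.prems show ?thesis
        by (rule derivable_repeat_mset_cancel_Imp_free)
    qed
  qed
qed

theorem lemma4p5:
  shows "(\<forall>G D P S. derivable G D \<longrightarrow> derivable P S \<longrightarrow> derivable (G + P) (S + D))
       \<and> (\<forall>n G D. n \<ge> 2 \<longrightarrow> derivable (mrep n G) (mrep n D) \<longrightarrow> derivable G D)"
proof (intro conjI allI impI)
  show "derivable (G + P) (S + D)" if "derivable G D" "derivable P S" for G D P S
    using that by (rule derivable_mix)
  show "derivable G D" if "n \<ge> 2" "derivable (mrep n G) (mrep n D)" for n G D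
    using that derivable_repeat_mset_cancel[of n G D] by (simp add: mrep_def)
qed

end
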